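(* Let $n$ be a positive integer and let $D_n=\langle x,y\mid x^n=e,\ y^2=e,\ (xy)^2=e\rangle$ be the dihedral group with generating set $\Delta=\{x,y\}$. Then $W=W_xU_x+W_yU_y$ is a homogeneous scalar quantum walk on $C_\Delta(D_n)$ if and only if, up to a global phase, $W_x=\cos\phi$ and $W_y=i\sin\phi$ for some real $\phi$ (with both values nonzero). In particular such a walk exists; for $n=2$ this gives a homogeneous scalar quantum walk on the hypercube of dimension 2.
   Context: The Cayley graph $C_\Delta(\Gamma)$ has vertex set $\Gamma$ and directed edges $(g,g\delta)$, $g\in\Gamma,\delta\in\Delta$. Let $\ell^2(\Gamma)$ have orthonormal basis $\{|g\rangle\}_{g\in\Gamma}$ and for $\delta\in\Gamma$ let $U_\delta|g\rangle=|g\delta\rangle$. A homogeneous scalar quantum walk on $C_\Delta(\Gamma)$ is a unitary operator $W=\sum_{\delta\in\Delta}W_\delta U_\delta$ with all complex coefficients $W_\delta$ nonzero. "Up to a global phase" means that all coefficients may be multiplied by a common complex number of modulus one. *)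

theory Defs
  imports Complex_Main "HOL-Algebra.Group"
begin

text \<open>Dihedral group D_n as the concrete model: the pair (a, s) stands for x^a y^s,
  with a in {0..<n}.  Since y x y = x^(-1), we get
  x^a y^s x^b y^t = x^(a + (-1)^s b) y^(s+t).\<close>

definition dihedral :: "nat \<Rightarrow> (nat \<times> bool) monoid" where
  "dihedral n = \<lparr> carrier = {0..<n} \<times> UNIV,
     mult = (\<lambda>(a, s) (b, t). ((if s then a + n - b else a + b) mod n, s \<noteq> t)),
     one = (0, False) \<rparr>"

definition dih_x :: "nat \<Rightarrow> nat \<times> bool" where
  "dih_x n = (1 mod n, False)"

definition dih_y :: "nat \<times> bool" where
  "dih_y = (0, True)"

text \<open>The operator W = sum_{delta in Delta} W_delta U_delta with U_delta |g> = |g delta>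
  has matrix entries <h|W|g> = sum of W_delta over delta in Delta with g delta = h.\<close>

definition walk_op :: "('a, 'b) monoid_scheme \<Rightarrow> 'a set \<Rightarrow> ('a \<Rightarrow> complex)
    \<Rightarrow> ('a \<Rightarrow> complex) \<Rightarrow> 'a \<Rightarrow> complex" where
  "walk_op G \<Delta> c f h =
     (\<Sum>g\<in>carrier G. (\<Sum>\<delta>\<in>{\<delta>\<in>\<Delta>. g \<otimes>\<^bsub>G\<^esub> \<delta> = h}. c \<delta>) * f g)"

definition unitary_on :: "('a, 'b) monoid_scheme \<Rightarrow> (('a \<Rightarrow> complex) \<Rightarrow> 'a \<Rightarrow> complex) \<Rightarrow> bool" where
  "unitary_on G W \<longleftrightarrow>
     (\<forall>f. (\<Sum>h\<in>carrier G. (cmod (W f h))\<^sup>2) = (\<Sum>h\<in>carrier G. (cmod (f h))\<^sup>2)) \<and>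
     (\<forall>v. \<exists>f. \<forall>h\<in>carrier G. W f h = v h)"

definition hom_scalar_qwalk :: "('a, 'b) monoid_scheme \<Rightarrow> 'a set \<Rightarrow> ('a \<Rightarrow> complex) \<Rightarrow> bool" where
  "hom_scalar_qwalk G \<Delta> c \<longleftrightarrow> unitary_on G (walk_op G \<Delta> c) \<and> (\<forall>\<delta>\<in>\<Delta>. c \<delta> \<noteq> 0)"

end

theory Submission
  imports Defs
begin

text \<open>Write \<open>a = c x\<close>, \<open>b = c y\<close> and \<open>z = x y\<^sup>-\<^sup>1\<close>. Since right translations permute the group,
  \<open>\<parallel>W f\<parallel>\<^sup>2 = (\<bar>a\<bar>\<^sup>2 + \<bar>b\<bar>\<^sup>2) \<parallel>f\<parallel>\<^sup>2 + 2 Re (a b\<^sup>* R f)\<close> with the autocorrelation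
  \<open>R f = \<Sum>k. f k (f (k z))\<^sup>*\<close>, which is real because \<open>z\<close> is an involution in the dihedral group.
  Testing the indicators of \<open>{1}\<close> and \<open>{1, z}\<close> shows that \<open>W\<close> is an isometry exactly when
  \<open>\<bar>a\<bar>\<^sup>2 + \<bar>b\<bar>\<^sup>2 = 1\<close> and \<open>Re (a b\<^sup>*) = 0\<close>, and then \<open>f g = a\<^sup>* v (g x) + b\<^sup>* v (g y)\<close> solves
  \<open>W f = v\<close>. Nonzero pairs satisfying these two conditions are exactly
  \<open>(u cos \<phi>, u i sin \<phi>)\<close> with \<open>\<bar>u\<bar> = 1\<close>.\<close>

lemma cmod_add_power2: "(cmod (u + v))\<^sup>2 = (cmod u)\<^sup>2 + (cmod v)\<^sup>2 + 2 * Re (u * cnj v)"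
  by (simp add: cmod_power2 power2_sum algebra_simps)

lemma Re_mult_cnj_eq_0_iff:
  fixes a b :: complex
  assumes "a \<noteq> 0"
  shows "Re (a * cnj b) = 0 \<longleftrightarrow> (\<exists>t::real. b = a * (\<i> * of_real t))"
proof -
  define w where "w = b / a"
  have b: "b = a * w" using assms by (simp add: w_def)
  have "a * cnj b = (a * cnj a) * cnj w"
    by (simp add: b mult_ac)
  also have "\<dots> = of_real ((cmod a)\<^sup>2) * cnj w"
    by (simp only: complex_norm_square)
  finally have "a * cnj b = of_real ((cmod a)\<^sup>2) * cnj w" .
  then have "Re (a * cnj b) = 0 \<longleftrightarrow> Re w = 0"
    using assms by simp
  also have "\<dots> \<longleftrightarrow> (\<exists>t::real. w = \<i> * of_real t)"
    by (auto simp: complex_eq_iff)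
  also have "\<dots> \<longleftrightarrow> (\<exists>t::real. b = a * (\<i> * of_real t))"
    using assms by (auto simp: b)
  finally show ?thesis .
qed

lemma orthogonal_unit_pair_iff_cos_sin:
  fixes a b :: complex
  shows "((cmod a)\<^sup>2 + (cmod b)\<^sup>2 = 1 \<and> Re (a * cnj b) = 0 \<and> a \<noteq> 0 \<and> b \<noteq> 0) \<longleftrightarrow>
    (\<exists>u (\<phi>::real). cmod u = 1 \<and> cos \<phi> \<noteq> 0 \<and> sin \<phi> \<noteq> 0 \<and>
       a = u * complex_of_real (cos \<phi>) \<and> b = u * (\<i> * complex_of_real (sin \<phi>)))"
proof
  assume "\<exists>u (\<phi>::real). cmod u = 1 \<and> cos \<phi> \<noteq> 0 \<and> sin \<phi> \<noteq> 0 \<and>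
    a = u * complex_of_real (cos \<phi>) \<and> b = u * (\<i> * complex_of_real (sin \<phi>))"
  then obtain u \<phi> where u: "cmod u = 1" and "cos \<phi> \<noteq> 0" "sin \<phi> \<noteq> 0"
    and a: "a = u * complex_of_real (cos \<phi>)" and b: "b = u * (\<i> * complex_of_real (sin \<phi>))"
    by blast
  have "u * cnj u = 1"
    using u by (simp flip: complex_norm_square)
  moreover have "a * cnj b = (u * cnj u) * (- \<i> * of_real (cos \<phi> * sin \<phi>))"
    by (simp add: a b algebra_simps)
  ultimately have "Re (a * cnj b) = 0" by simp
  then show "(cmod a)\<^sup>2 + (cmod b)\<^sup>2 = 1 \<and> Re (a * cnj b) = 0 \<and> a \<noteq> 0 \<and> b \<noteq> 0"
    using u \<open>cos \<phi> \<noteq> 0\<close> \<open>sin \<phi> \<noteq> 0\<close> by (auto simp: a b norm_mult power_mult_distrib)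
next
  assume "(cmod a)\<^sup>2 + (cmod b)\<^sup>2 = 1 \<and> Re (a * cnj b) = 0 \<and> a \<noteq> 0 \<and> b \<noteq> 0"
  then have unit: "(cmod a)\<^sup>2 + (cmod b)\<^sup>2 = 1" and "a \<noteq> 0" "b \<noteq> 0"
    and "Re (a * cnj b) = 0"
    by auto
  then obtain t where b: "b = a * (\<i> * of_real t)"
    using Re_mult_cnj_eq_0_iff by blast
  define r where "r = cmod a"
  have "r > 0" using \<open>a \<noteq> 0\<close> by (simp add: r_def)
  have "r\<^sup>2 + (r * t)\<^sup>2 = 1"
    using unit by (simp add: b r_def norm_mult power_mult_distrib)
  then obtain \<phi> where cos: "r = cos \<phi>" and sin: "r * t = sin \<phi>"
    by (rule sincos_total_2pi)
  define u where "u = a / of_real r"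
  have "cmod u = 1" using \<open>r > 0\<close> by (simp add: u_def r_def norm_divide)
  moreover have "a = u * complex_of_real (cos \<phi>)" and "b = u * (\<i> * complex_of_real (sin \<phi>))"
    using \<open>r > 0\<close> by (simp_all add: u_def b flip: cos sin)
  moreover have "cos \<phi> \<noteq> 0" and "sin \<phi> \<noteq> 0"
    using \<open>r > 0\<close> \<open>b \<noteq> 0\<close> by (auto simp: b simp flip: cos sin)
  ultimately show "\<exists>u (\<phi>::real). cmod u = 1 \<and> cos \<phi> \<noteq> 0 \<and> sin \<phi> \<noteq> 0 \<and>
    a = u * complex_of_real (cos \<phi>) \<and> b = u * (\<i> * complex_of_real (sin \<phi>))"
    by blast
qed

locale finite_group = group +
  assumes finite_carrier [simp]: "finite (carrier G)"

lemma (in group) sum_right_translation: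
  assumes "g \<in> carrier G"
  shows "(\<Sum>h\<in>carrier G. F (h \<otimes> g)) = (\<Sum>h\<in>carrier G. F h)"
  by (rule sum.reindex_bij_witness[where i = "\<lambda>h. h \<otimes> inv g" and j = "\<lambda>h. h \<otimes> g"])
     (use assms in \<open>auto simp: m_assoc\<close>)

lemma (in group) inv_mult_comm_if_involution:
  assumes x: "x \<in> carrier G" and y: "y \<in> carrier G" and "(x \<otimes> inv y) \<otimes> (x \<otimes> inv y) = \<one>"
  shows "inv x \<otimes> y = inv y \<otimes> x"
proof -
  have "inv x \<otimes> y = inv x \<otimes> ((x \<otimes> inv y) \<otimes> (x \<otimes> inv y)) \<otimes> y"
    using assms by simp
  also have "\<dots> = inv y \<otimes> x"
    using x y by (simp add: m_assoc flip: m_assoc[of "inv x" x])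
  finally show ?thesis .
qed

lemma (in finite_group) walk_op_eq_sum:
  assumes "\<Delta> \<subseteq> carrier G" and "h \<in> carrier G"
  shows "walk_op G \<Delta> c f h = (\<Sum>\<delta>\<in>\<Delta>. c \<delta> * f (h \<otimes> inv \<delta>))"
proof -
  have "(\<Sum>\<delta>\<in>{\<delta>\<in>\<Delta>. g \<otimes> \<delta> = h}. c \<delta>) * f g = (\<Sum>\<delta>\<in>\<Delta>. if g = h \<otimes> inv \<delta> then c \<delta> * f g else 0)"
    if "g \<in> carrier G" for g
  proof -
    have "g \<otimes> \<delta> = h \<longleftrightarrow> g = h \<otimes> inv \<delta>" if "\<delta> \<in> \<Delta>" for \<delta>
      using that \<open>g \<in> carrier G\<close> assms inv_solve_right'[of g h \<delta>] by auto
    then show ?thesis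
      by (simp add: sum_distrib_right sum.inter_filter[symmetric] finite_subset[OF assms(1)] cong: conj_cong)
  qed
  then have "walk_op G \<Delta> c f h = (\<Sum>g\<in>carrier G. \<Sum>\<delta>\<in>\<Delta>. if g = h \<otimes> inv \<delta> then c \<delta> * f g else 0)"
    unfolding walk_op_def by (rule sum.cong[OF refl])
  also have "\<dots> = (\<Sum>\<delta>\<in>\<Delta>. c \<delta> * f (h \<otimes> inv \<delta>))"
    using assms by (subst sum.swap) (auto intro!: sum.cong)
  finally show ?thesis .
qed

lemma (in finite_group) walk_op_two:
  assumes "x \<in> carrier G" "y \<in> carrier G" "x \<noteq> y" "h \<in> carrier G"
  shows "walk_op G {x, y} c f h = c x * f (h \<otimes> inv x) + c y * f (h \<otimes> inv y)"
  using assms by (simp add: walk_op_eq_sum)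

definition autocorrelation :: "('a, 'b) monoid_scheme \<Rightarrow> ('a \<Rightarrow> complex) \<Rightarrow> 'a \<Rightarrow> complex" where
  "autocorrelation G f z = (\<Sum>k\<in>carrier G. f k * cnj (f (k \<otimes>\<^bsub>G\<^esub> z)))"

lemma (in group) autocorrelation_real_if_involution:
  assumes "z \<in> carrier G" and "z \<otimes> z = \<one>"
  shows "cnj (autocorrelation G f z) = autocorrelation G f z"
proof -
  have "cnj (autocorrelation G f z) = (\<Sum>k\<in>carrier G. cnj (f k) * f (k \<otimes> z))"
    by (simp add: autocorrelation_def)
  also have "\<dots> = (\<Sum>k\<in>carrier G. cnj (f (k \<otimes> z)) * f (k \<otimes> z \<otimes> z))"
    by (rule sum_right_translation[OF assms(1), symmetric])
  also have "\<dots> = autocorrelation G f z"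
    using assms by (simp add: autocorrelation_def m_assoc mult.commute)
  finally show ?thesis .
qed

lemma (in finite_group) autocorrelation_indicator:
  assumes "A \<subseteq> carrier G" and "z \<in> carrier G"
  shows "autocorrelation G (\<lambda>g. if g \<in> A then 1 else 0) z = of_nat (card {k \<in> A. k \<otimes> z \<in> A})"
proof -
  have "autocorrelation G (\<lambda>g. if g \<in> A then 1 else 0) z = (\<Sum>k\<in>carrier G. if k \<in> {k \<in> A. k \<otimes> z \<in> A} then 1 else 0)"
    unfolding autocorrelation_def by (rule sum.cong) auto
  also have "\<dots> = of_nat (card {k \<in> A. k \<otimes> z \<in> A})"
    using assms by (simp add: sum.If_cases Int_absorb1 subset_iff)
  finally show ?thesis .
qed

lemma (in finite_group) norm_walk_op_two:
  assumes x: "x \<in> carrier G" and y: "y \<in> carrier G" and "x \<noteq> y"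
  shows "(\<Sum>h\<in>carrier G. (cmod (walk_op G {x, y} c f h))\<^sup>2)
     = ((cmod (c x))\<^sup>2 + (cmod (c y))\<^sup>2) * (\<Sum>h\<in>carrier G. (cmod (f h))\<^sup>2)
       + 2 * Re (c x * cnj (c y) * autocorrelation G f (x \<otimes> inv y))"
proof -
  let ?a = "c x" and ?b = "c y"
  have "(\<Sum>h\<in>carrier G. (cmod (walk_op G {x, y} c f h))\<^sup>2)
      = (\<Sum>h\<in>carrier G. (cmod ?a)\<^sup>2 * (cmod (f (h \<otimes> inv x)))\<^sup>2 + (cmod ?b)\<^sup>2 * (cmod (f (h \<otimes> inv y)))\<^sup>2
          + 2 * Re (?a * cnj ?b * (f (h \<otimes> inv x) * cnj (f (h \<otimes> inv y)))))"
    using assms by (intro sum.cong) (simp_all add: walk_op_two cmod_add_power2 norm_mult power_mult_distrib mult_ac)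
  also have "\<dots> = (cmod ?a)\<^sup>2 * (\<Sum>h\<in>carrier G. (cmod (f (h \<otimes> inv x)))\<^sup>2)
      + (cmod ?b)\<^sup>2 * (\<Sum>h\<in>carrier G. (cmod (f (h \<otimes> inv y)))\<^sup>2)
      + 2 * Re (?a * cnj ?b * (\<Sum>h\<in>carrier G. f (h \<otimes> inv x) * cnj (f (h \<otimes> inv y))))"
    by (simp add: sum.distrib sum_distrib_left Re_sum[symmetric])
  also have "(\<Sum>h\<in>carrier G. f (h \<otimes> inv x) * cnj (f (h \<otimes> inv y))) = autocorrelation G f (x \<otimes> inv y)"
    using sum_right_translation[OF x, of "\<lambda>h. f (h \<otimes> inv x) * cnj (f (h \<otimes> inv y))", symmetric] x y
    by (simp add: autocorrelation_def m_assoc)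
  also have "(\<Sum>h\<in>carrier G. (cmod (f (h \<otimes> inv x)))\<^sup>2) = (\<Sum>h\<in>carrier G. (cmod (f h))\<^sup>2)"
    using x by (intro sum_right_translation) simp
  also have "(\<Sum>h\<in>carrier G. (cmod (f (h \<otimes> inv y)))\<^sup>2) = (\<Sum>h\<in>carrier G. (cmod (f h))\<^sup>2)"
    using y by (intro sum_right_translation) simp
  finally show ?thesis
    by (simp add: distrib_right)
qed

lemma (in finite_group) isometric_walk_op_two_imp:
  assumes x: "x \<in> carrier G" and y: "y \<in> carrier G" and "x \<noteq> y"
    and involution: "(x \<otimes> inv y) \<otimes> (x \<otimes> inv y) = \<one>"
    and isometric: "\<And>f. (\<Sum>h\<in>carrier G. (cmod (walk_op G {x, y} c f h))\<^sup>2) = (\<Sum>h\<in>carrier G. (cmod (f h))\<^sup>2)"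
  shows "(cmod (c x))\<^sup>2 + (cmod (c y))\<^sup>2 = 1 \<and> Re (c x * cnj (c y)) = 0"
proof -
  define z where "z = x \<otimes> inv y"
  have z: "z \<in> carrier G" "z \<noteq> \<one>" "z \<otimes> z = \<one>"
    using assms inv_solve_right'[of \<one> x y] by (auto simp: z_def)
  have indicator_identity: "((cmod (c x))\<^sup>2 + (cmod (c y))\<^sup>2) * card A
      + 2 * Re (c x * cnj (c y) * of_nat (card {k \<in> A. k \<otimes> z \<in> A})) = card A"
    if A: "A \<subseteq> carrier G" for A
  proof -
    let ?f = "\<lambda>g. if g \<in> A then 1 else 0 :: complex"
    have "(\<Sum>h\<in>carrier G. (cmod (?f h))\<^sup>2) = (\<Sum>h\<in>carrier G. if h \<in> A then 1 else 0)"
      by (rule sum.cong) auto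
    also have "\<dots> = card A"
      using A by (simp add: sum.If_cases Int_absorb1)
    finally have "(\<Sum>h\<in>carrier G. (cmod (?f h))\<^sup>2) = card A" .
    then show ?thesis
      using isometric[of ?f] norm_walk_op_two[OF x y \<open>x \<noteq> y\<close>, of c ?f]
        autocorrelation_indicator[OF A z(1)]
      by (simp only: z_def)
  qed
  have "{k \<in> {\<one>}. k \<otimes> z \<in> {\<one>}} = {}" "{k \<in> {\<one>, z}. k \<otimes> z \<in> {\<one>, z}} = {\<one>, z}"
    using z by auto
  from indicator_identity[of "{\<one>}", unfolded this(1)] indicator_identity[of "{\<one>, z}", unfolded this(2)]
  have "(cmod (c x))\<^sup>2 + (cmod (c y))\<^sup>2 = 1"
    and "2 * ((cmod (c x))\<^sup>2 + (cmod (c y))\<^sup>2) + 4 * Re (c x * cnj (c y)) = 2"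
    using z by (simp_all add: algebra_simps)
  then show ?thesis by simp
qed

lemma (in finite_group) walk_op_two_surj:
  assumes x: "x \<in> carrier G" and y: "y \<in> carrier G" and "x \<noteq> y"
    and involution: "(x \<otimes> inv y) \<otimes> (x \<otimes> inv y) = \<one>"
    and unit: "(cmod (c x))\<^sup>2 + (cmod (c y))\<^sup>2 = 1" and orth: "Re (c x * cnj (c y)) = 0"
  shows "\<exists>f. \<forall>h\<in>carrier G. walk_op G {x, y} c f h = v h"
proof (intro exI ballI)
  fix h assume h: "h \<in> carrier G"
  let ?a = "c x" and ?b = "c y"
  let ?f = "\<lambda>g. cnj ?a * v (g \<otimes> x) + cnj ?b * v (g \<otimes> y)"
  have norm_sum: "?a * cnj ?a + ?b * cnj ?b = of_real ((cmod ?a)\<^sup>2 + (cmod ?b)\<^sup>2)"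
    by (simp only: complex_norm_square of_real_add)
  have norm_sum_eq_1: "?a * cnj ?a + ?b * cnj ?b = 1" using unit norm_sum by simp
  have cross_sum_eq_0: "?a * cnj ?b + ?b * cnj ?a = 0"
    using orth complex_add_cnj[of "?a * cnj ?b"] by (simp add: mult.commute)
  have swap: "h \<otimes> inv x \<otimes> y = h \<otimes> inv y \<otimes> x"
    using inv_mult_comm_if_involution[OF x y involution] x y h by (simp add: m_assoc)
  have "?a * ?f (h \<otimes> inv x) + ?b * ?f (h \<otimes> inv y)
      = (?a * cnj ?a + ?b * cnj ?b) * v h + (?a * cnj ?b + ?b * cnj ?a) * v (h \<otimes> inv y \<otimes> x)"
    using x y h swap by (simp add: m_assoc algebra_simps)
  then have "?a * ?f (h \<otimes> inv x) + ?b * ?f (h \<otimes> inv y) = v h"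
    using norm_sum_eq_1 cross_sum_eq_0 by simp
  then show "walk_op G {x, y} c ?f h = v h"
    using x y h \<open>x \<noteq> y\<close> by (simp add: walk_op_two)
qed

lemma (in finite_group) unitary_walk_op_two_iff:
  assumes x: "x \<in> carrier G" and y: "y \<in> carrier G" and "x \<noteq> y"
    and involution: "(x \<otimes> inv y) \<otimes> (x \<otimes> inv y) = \<one>"
  shows "unitary_on G (walk_op G {x, y} c) \<longleftrightarrow>
    (cmod (c x))\<^sup>2 + (cmod (c y))\<^sup>2 = 1 \<and> Re (c x * cnj (c y)) = 0"
proof
  assume "unitary_on G (walk_op G {x, y} c)"
  then show "(cmod (c x))\<^sup>2 + (cmod (c y))\<^sup>2 = 1 \<and> Re (c x * cnj (c y)) = 0"
    using isometric_walk_op_two_imp[OF assms] by (simp add: unitary_on_def)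
next
  assume conditions: "(cmod (c x))\<^sup>2 + (cmod (c y))\<^sup>2 = 1 \<and> Re (c x * cnj (c y)) = 0"
  have "Re (c x * cnj (c y) * autocorrelation G f (x \<otimes> inv y)) = 0" for f
  proof -
    have "Im (autocorrelation G f (x \<otimes> inv y)) = 0"
      using autocorrelation_real_if_involution[OF _ involution, of f] x y
      by (metis Reals_cnj_iff complex_is_Real_iff inv_closed m_closed)
    then show ?thesis using conditions by simp
  qed
  then show "unitary_on G (walk_op G {x, y} c)"
    using conditions norm_walk_op_two[OF x y \<open>x \<noteq> y\<close>] walk_op_two_surj[OF assms]
    by (simp add: unitary_on_def)
qed

definition reflection_sign :: "bool \<Rightarrow> int" where
  "reflection_sign s = (if s then -1 else 1)"

lemma carrier_dihedral: "carrier (dihedral n) = {0..<n} \<times> UNIV"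
  by (simp add: dihedral_def)

text \<open>Reading the first component as an integer modulo \<open>n\<close> removes the truncated subtraction
  of \<^const>\<open>dihedral\<close>, so associativity becomes a congruence computation.\<close>

lemma dihedral_mult_eq:
  assumes "b < n"
  shows "(a, s) \<otimes>\<^bsub>dihedral n\<^esub> (b, t) = (nat ((int a + reflection_sign s * int b) mod int n), s \<noteq> t)"
proof -
  have "int ((if s then a + n - b else a + b) mod n) = (int a + reflection_sign s * int b) mod int n"
    using assms mod_add_self2[of "int a - int b" "int n"]
    by (auto simp: reflection_sign_def zmod_int of_nat_diff algebra_simps)
  then show ?thesis
    by (simp add: dihedral_def flip: nat_int)
qed

lemma group_dihedral:
  assumes "n \<ge> 1"
  shows "group (dihedral n)"
proof (rule groupI)
  let ?G = "dihedral n"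
  show "x \<otimes>\<^bsub>?G\<^esub> y \<in> carrier ?G" for x y
    using assms by (auto simp: dihedral_def split: prod.splits)
  show "\<one>\<^bsub>?G\<^esub> \<in> carrier ?G" using assms by (simp add: dihedral_def)
  show "\<one>\<^bsub>?G\<^esub> \<otimes>\<^bsub>?G\<^esub> x = x" if "x \<in> carrier ?G" for x
    using that by (auto simp: dihedral_def)
  show "\<exists>y\<in>carrier ?G. y \<otimes>\<^bsub>?G\<^esub> x = \<one>\<^bsub>?G\<^esub>" if x: "x \<in> carrier ?G" for x
  proof -
    obtain a s where x: "x = (a, s)" "a < n" using x by (cases x) (auto simp: carrier_dihedral)
    show ?thesis
    proof (cases s)
      case True
      then show ?thesis using x by (intro bexI[of _ x]) (auto simp: dihedral_def)
    next
      case False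
      then show ?thesis using x
        by (intro bexI[of _ "((n - a) mod n, False)"]) (auto simp: dihedral_def mod_add_left_eq)
    qed
  qed
  show "(x \<otimes>\<^bsub>?G\<^esub> y) \<otimes>\<^bsub>?G\<^esub> z = x \<otimes>\<^bsub>?G\<^esub> (y \<otimes>\<^bsub>?G\<^esub> z)"
    if xyz: "x \<in> carrier ?G" "y \<in> carrier ?G" "z \<in> carrier ?G" for x y z
  proof -
    obtain a s b t c u where xyz: "x = (a, s)" "y = (b, t)" "z = (c, u)" "b < n" "c < n"
      using xyz by (cases x, cases y, cases z) (auto simp: carrier_dihedral)
    have "n > 0" using assms by simp
    then show ?thesis
      using xyz
      by (simp add: dihedral_mult_eq nat_less_iff mod_add_left_eq mod_add_right_eq mod_diff_right_eq mod_mult_right_eq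
          reflection_sign_def algebra_simps)
  qed
qed

lemma finite_group_dihedral:
  assumes "n \<ge> 1"
  shows "finite_group (dihedral n)"
  using group_dihedral[OF assms]
  by (simp add: finite_group_def finite_group_axioms_def carrier_dihedral)

lemma dihedral_generators:
  assumes "n \<ge> 1"
  shows "dih_x n \<in> carrier (dihedral n)" and "dih_y \<in> carrier (dihedral n)" and "dih_x n \<noteq> dih_y"
  using assms by (simp_all add: carrier_dihedral dih_x_def dih_y_def)

lemma dihedral_relations:
  shows "dih_y \<otimes>\<^bsub>dihedral n\<^esub> dih_y = \<one>\<^bsub>dihedral n\<^esub>"
    and "(dih_x n \<otimes>\<^bsub>dihedral n\<^esub> dih_y) \<otimes>\<^bsub>dihedral n\<^esub> (dih_x n \<otimes>\<^bsub>dihedral n\<^esub> dih_y) = \<one>\<^bsub>dihedral n\<^esub>"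
  by (simp_all add: dihedral_def dih_x_def dih_y_def)

lemma dihedral_involution:
  assumes "n \<ge> 1"
  shows "(dih_x n \<otimes>\<^bsub>dihedral n\<^esub> inv\<^bsub>dihedral n\<^esub> dih_y) \<otimes>\<^bsub>dihedral n\<^esub>
      (dih_x n \<otimes>\<^bsub>dihedral n\<^esub> inv\<^bsub>dihedral n\<^esub> dih_y) = \<one>\<^bsub>dihedral n\<^esub>"
proof -
  have "inv\<^bsub>dihedral n\<^esub> dih_y = dih_y"
    using group.inv_equality[OF group_dihedral[OF assms]] dihedral_generators[OF assms]
      dihedral_relations(1) by blast
  then show ?thesis
    using dihedral_relations(2) by simp
qed

theorem mainTheorem3:
  fixes n :: nat and c :: "nat \<times> bool \<Rightarrow> complex"
  assumes "n \<ge> 1"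
  shows "(hom_scalar_qwalk (dihedral n) {dih_x n, dih_y} c \<longleftrightarrow>
           (\<exists>u (\<phi>::real). cmod u = 1 \<and> cos \<phi> \<noteq> 0 \<and> sin \<phi> \<noteq> 0 \<and>
              c (dih_x n) = u * complex_of_real (cos \<phi>) \<and>
              c dih_y = u * (\<i> * complex_of_real (sin \<phi>))))
         \<and> (\<exists>c'. hom_scalar_qwalk (dihedral n) {dih_x n, dih_y} c')"
proof -
  interpret finite_group "dihedral n"
    using finite_group_dihedral[OF assms] .
  note generators = dihedral_generators[OF assms]
  have criterion: "hom_scalar_qwalk (dihedral n) {dih_x n, dih_y} c' \<longleftrightarrow>
      (\<exists>u (\<phi>::real). cmod u = 1 \<and> cos \<phi> \<noteq> 0 \<and> sin \<phi> \<noteq> 0 \<and>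
         c' (dih_x n) = u * complex_of_real (cos \<phi>) \<and> c' dih_y = u * (\<i> * complex_of_real (sin \<phi>)))"
    for c'
    unfolding hom_scalar_qwalk_def unitary_walk_op_two_iff[OF generators dihedral_involution[OF assms]]
      orthogonal_unit_pair_iff_cos_sin[symmetric]
    by auto
  define c\<^sub>0 :: "nat \<times> bool \<Rightarrow> complex" where
    "c\<^sub>0 = (\<lambda>\<delta>. if \<delta> = dih_y then \<i> * of_real (sin (pi / 4)) else of_real (cos (pi / 4)))"
  have "hom_scalar_qwalk (dihedral n) {dih_x n, dih_y} c\<^sub>0"
    unfolding criterion
    by (rule exI[of _ 1], rule exI[of _ "pi / 4"]) (simp add: c\<^sub>0_def generators cos_45 sin_45)
  then show ?thesis
    using criterion by blast
qed

end
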